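(* Consider the online instance reservation problem described in the context, with parameters $p>0$, $\alpha\in[0,1)$, $\tau\ge1$, and $\beta=1/(1-\alpha)$. The deterministic online algorithm $A_\beta$ is $(2-\alpha)$-competitive: for every $T$ and every demand sequence $\mathbf d=(d_1,\dots,d_T)$, $C_{A_\beta}(\mathbf d)\le (2-\alpha)\,C_{\mathrm{OPT}}(\mathbf d)$, where $C_{A_\beta}(\mathbf d)$ is the cost incurred by $A_\beta$ and $C_{\mathrm{OPT}}(\mathbf d)$ is the optimal offline cost.
   Context: Instance reservation problem: time is slotted $t=1,2,\dots,T$. At each time $t$ a demand $d_t\in\{0,1,2,\dots\}$ arrives; set $d_t=0$ for $t\le 0$. A user chooses integers $o_t\ge 0$ (on-demand instances used at $t$) and $r_t\ge 0$ (instances newly reserved at $t$; $r_t=0$ for $t\le 0$), subject to $o_t+\sum_{i=t-\tau+1}^{t} r_i\ge d_t$ for all $t$, where $\tau$ is the reservation period. The reservation fee is normalized to $1$, the on-demand rate is $p$ (the paper assumes throughout $p\ll 1$), and reserved instances run at rate $\alpha p$. The total cost is $C=\sum_{t=1}^T\big(o_t p + r_t + \alpha p(d_t-o_t)\big)$. $C_{\mathrm{OPT}}(\mathbf d)$ is the minimum of $C$ over all feasible integer $(o_t,r_t)$ given the whole sequence. An online algorithm chooses $o_t,r_t$ knowing only $d_1,\dots,d_t$. Algorithm $A_z$ (threshold $z\ge0$): maintain integers $x_i$, initially $x_i=0$ for all $i$. At each time $t$, upon arrival of $d_t$: while $p\cdot\big|\{i: t-\tau+1\le i\le t,\ d_i>x_i\}\big|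 > z$: increase $r_t$ by $1$; increase $x_i$ by $1$ for $i=t,\dots,t+\tau-1$; increase $x_i$ by $1$ for $i=t-\tau+1,\dots,t-1$. Then set $o_t=\max\{d_t-x_t,0\}$. $A_\beta$ is $A_z$ with $z=\beta$. *)

theory Defs
  imports Complex_Main
begin

(* Time slots are t = 1,2,...; values of d, o, r at index 0 are ignored.
   The window {t-\<tau>+1 .. t} is restricted to slots \<ge> 1 (d_i = r_i = 0 for i \<le> 0). *)
definition window :: "nat \<Rightarrow> nat \<Rightarrow> nat set" where
  "window \<tau> t = {i. 1 \<le> i \<and> i \<le> t \<and> t < i + \<tau>}"

definition cost :: "real \<Rightarrow> real \<Rightarrow> (nat \<Rightarrow> nat) \<Rightarrow> nat \<Rightarrow> (nat \<Rightarrow> nat) \<Rightarrow> (nat \<Rightarrow> nat) \<Rightarrow> real" where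
  "cost p \<alpha> d T ov rv =
     (\<Sum>t = 1..T. real (ov t) * p + real (rv t) + \<alpha> * p * (real (d t) - real (ov t)))"

definition feasible :: "nat \<Rightarrow> (nat \<Rightarrow> nat) \<Rightarrow> nat \<Rightarrow> (nat \<Rightarrow> nat) \<Rightarrow> (nat \<Rightarrow> nat) \<Rightarrow> bool" where
  "feasible \<tau> d T ov rv \<longleftrightarrow> (\<forall>t\<in>{1..T}. d t \<le> ov t + (\<Sum>i\<in>window \<tau> t. rv i))"

definition copt :: "real \<Rightarrow> real \<Rightarrow> nat \<Rightarrow> (nat \<Rightarrow> nat) \<Rightarrow> nat \<Rightarrow> real" where
  "copt p \<alpha> \<tau> d T = Inf {cost p \<alpha> d T ov rv | ov rv. feasible \<tau> d T ov rv}"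

(* The while loop at time t, started from state x, runs exactly
   k times where k is the least number of iterations after which
   p * |{i in window: d_i > x_i + k}| \<le> z (each iteration adds 1 to every x_i
   with t-\<tau>+1 \<le> i \<le> t+\<tau>-1, in particular to every x_i in the window). *)
definition alg_k :: "real \<Rightarrow> real \<Rightarrow> nat \<Rightarrow> (nat \<Rightarrow> nat) \<Rightarrow> (nat \<Rightarrow> nat) \<Rightarrow> nat \<Rightarrow> nat" where
  "alg_k p z \<tau> d x t =
     (LEAST k::nat. \<not> (p * real (card {i \<in> window \<tau> t. x i + k < d i}) > z))"

fun alg_x :: "real \<Rightarrow> real \<Rightarrow> nat \<Rightarrow> (nat \<Rightarrow> nat) \<Rightarrow> nat \<Rightarrow> (nat \<Rightarrow> nat)" where
  "alg_x p z \<tau> d 0 = (\<lambda>_. 0)"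
| "alg_x p z \<tau> d (Suc t) =
     (let x = alg_x p z \<tau> d t; k = alg_k p z \<tau> d x (Suc t)
      in (\<lambda>i. if Suc t < i + \<tau> \<and> i < Suc t + \<tau> then x i + k else x i))"

definition alg_r :: "real \<Rightarrow> real \<Rightarrow> nat \<Rightarrow> (nat \<Rightarrow> nat) \<Rightarrow> nat \<Rightarrow> nat" where
  "alg_r p z \<tau> d t = (if t = 0 then 0 else alg_k p z \<tau> d (alg_x p z \<tau> d (t - 1)) t)"

(* o_t = max{d_t - x_t, 0} (truncated nat subtraction) *)
definition alg_o :: "real \<Rightarrow> real \<Rightarrow> nat \<Rightarrow> (nat \<Rightarrow> nat) \<Rightarrow> nat \<Rightarrow> nat" where
  "alg_o p z \<tau> d t = d t - alg_x p z \<tau> d t t"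

end

theory Submission
  imports Defs
begin

text \<open>Let \<open>R\<close> count the reservations of \<open>A\<^sub>z\<close> cumulatively and \<open>H\<close> those of any feasible
  solution. The \<open>j\<close>-th reservation of \<open>A\<^sub>z\<close> is either matched injectively with a reservation
  of \<open>H\<close>, or at the time it was made more than \<open>z / p\<close> slots of the window had demand reaching
  level \<open>j\<close> above the old reservations; the competitor serves those unit demands on demand.
  Conversely, on-demand use of \<open>A\<^sub>z\<close> beyond the competitor's is a shortfall of its
  reservations against those of \<open>H\<close>; after each step at most \<open>z / p\<close> window slots are short,
  so the short slots split into \<open>\<lfloor>z / p\<rfloor>\<close> classes, each of which is paid for by \<open>H\<close>. Together
  \<open>z R + p O\<^sub>A \<le> 2 (z H + p O)\<close>; for \<open>z = 1 / (1 - \<alpha>)\<close> this bounds the variable part of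
  the cost by twice the competitor's, while the fixed part \<open>\<alpha> p \<Sum>d\<close> is at most \<open>\<alpha> OPT\<close>.\<close>

definition cum :: "(nat \<Rightarrow> nat) \<Rightarrow> nat \<Rightarrow> nat" where
  "cum r t = (\<Sum>s = 1..t. r s)"

lemma mono_cum: "mono (cum r)"
  unfolding mono_def cum_def by (auto intro: sum_mono2)

lemma cum_mono: "a \<le> b \<Longrightarrow> cum r a \<le> cum r b"
  using mono_cum by (rule monoD)

lemma cum_0 [simp]: "cum r 0 = 0"
  by (simp add: cum_def)

lemma cum_Suc [simp]: "cum r (Suc t) = cum r t + r (Suc t)"
  by (simp add: cum_def)

lemma sum_window_eq_cum_diff: "(\<Sum>i\<in>window \<tau> t. r i) = cum r t - cum r (t - \<tau>)"
proof -
  have "window \<tau> t = {1..t} - {1..t - \<tau>}"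
    unfolding window_def by auto
  then show ?thesis
    unfolding cum_def by (simp add: sum_diff_nat)
qed

lemma feasible_on_demand_ge:
  assumes "feasible \<tau> d T ov rv"
  shows "(\<Sum>i = 1..T. d i - (cum rv i - cum rv (i - \<tau>))) \<le> (\<Sum>i = 1..T. ov i)"
proof (rule sum_mono)
  fix i assume "i \<in> {1..T}"
  with assms have "d i \<le> ov i + (\<Sum>j\<in>window \<tau> i. rv j)"
    unfolding feasible_def by blast
  then show "d i - (cum rv i - cum rv (i - \<tau>)) \<le> ov i"
    unfolding sum_window_eq_cum_diff by linarith
qed

lemma finite_window: "finite (window \<tau> t)"
  by (rule finite_subset[of _ "{..t}"]) (auto simp: window_def)

lemma ex_cum_crossing:
  assumes "1 \<le> j" and "j \<le> cum r T"
  shows "\<exists>s\<in>{1..T}. cum r (s - 1) < j \<and> j \<le> cum r s"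
  using assms(2)
proof (induction T)
  case 0
  with assms(1) show ?case by simp
next
  case (Suc T)
  show ?case
  proof (cases "j \<le> cum r T")
    case True
    with Suc.IH show ?thesis by force
  next
    case False
    with Suc.prems show ?thesis by force
  qed
qed

section \<open>Charging the reservations\<close>

text \<open>\<open>G\<close> and \<open>H\<close> count the reservations of the algorithm and of a competitor cumulatively.\<close>

definition covered_units :: "(nat \<Rightarrow> nat) \<Rightarrow> (nat \<Rightarrow> nat) \<Rightarrow> nat \<Rightarrow> nat \<Rightarrow> nat set" where
  "covered_units G H \<tau> T = {j. \<exists>i\<in>{1..T}. G (i - 1) < j \<and> j \<le> G (i - \<tau>) + (H i - H (i - \<tau>))}"

lemma finite_covered_units:
  assumes "mono G" and "mono H"
  shows "finite (covered_units G H \<tau> T)"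
proof (rule finite_subset)
  show "covered_units G H \<tau> T \<subseteq> {..G T + H T}"
  proof
    fix j assume "j \<in> covered_units G H \<tau> T"
    then obtain i where "i \<in> {1..T}" and "j \<le> G (i - \<tau>) + (H i - H (i - \<tau>))"
      unfolding covered_units_def by auto
    moreover from \<open>i \<in> {1..T}\<close> have "G (i - \<tau>) \<le> G T" and "H i \<le> H T"
      using assms by (auto intro: monoD)
    ultimately show "j \<in> {..G T + H T}" by auto
  qed
qed simp

text \<open>Units covered at time \<open>i\<close> beyond \<open>G (i - \<tau>)\<close> are paid for by the \<open>H\<close>-reservations
  made in the window of \<open>i\<close>; those below are, by induction, paid for by earlier
  \<open>H\<close>-reservations, made no later than \<open>i - \<tau>\<close>.\<close>

lemma card_covered_units_atMost_le:
  assumes mG: "mono G" and mH: "mono H" and \<tau>: "1 \<le> \<tau>"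
    and "i \<in> {1..T}" and "G (i - 1) < j" and "j \<le> G (i - \<tau>) + (H i - H (i - \<tau>))"
  shows "card (covered_units G H \<tau> T \<inter> {..j}) \<le> H i"
  using assms(4-)
proof (induction j arbitrary: i rule: less_induct)
  case (less j)
  define U where "U = covered_units G H \<tau> T"
  define g where "g = G (i - \<tau>)"
  have fin: "finite U"
    unfolding U_def using mG mH by (rule finite_covered_units)
  have "g \<le> G (i - 1)"
    unfolding g_def using \<tau> mG by (auto intro: monoD)
  have "card (U \<inter> {..j}) \<le> card (U \<inter> {..g}) + card {g<..j}"
  proof -
    have split: "U \<inter> {..j} \<subseteq> (U \<inter> {..g}) \<union> {g<..j}" by auto
    show ?thesis
      by (rule order_trans[OF card_mono[OF _ split] card_Un_le]) (use fin in auto)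
  qed
  moreover have "card {g<..j} \<le> H i - H (i - \<tau>)"
    using less.prems unfolding g_def by simp
  moreover have "card (U \<inter> {..g}) \<le> H (i - \<tau>)"
  proof (cases "U \<inter> {..g} = {}")
    case False
    define j' where "j' = Max (U \<inter> {..g})"
    have fin': "finite (U \<inter> {..g})" using fin by auto
    have j': "j' \<in> U \<inter> {..g}"
      unfolding j'_def using fin' False by (rule Max_in)
    have same: "U \<inter> {..g} = U \<inter> {..j'}"
      using j' Max_ge[OF fin'] unfolding j'_def by auto
    from j' obtain i' where i': "i' \<in> {1..T}" "G (i' - 1) < j'"
        "j' \<le> G (i' - \<tau>) + (H i' - H (i' - \<tau>))"
      unfolding U_def covered_units_def by auto
    have "j' < j" using j' \<open>g \<le> G (i - 1)\<close> less.prems(2) by auto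
    with i' have IH: "card (U \<inter> {..j'}) \<le> H i'"
      unfolding U_def using less.IH by blast
    have "i' \<le> i - \<tau>"
    proof (rule ccontr)
      assume "\<not> i' \<le> i - \<tau>"
      then have "G (i - \<tau>) \<le> G (i' - 1)" using mG by (auto intro: monoD)
      with i'(2) j' show False unfolding g_def by auto
    qed
    then have "H i' \<le> H (i - \<tau>)" by (rule monoD[OF mH])
    with IH same show ?thesis by simp
  qed simp
  moreover have "H (i - \<tau>) \<le> H i" using mH by (auto intro: monoD)
  ultimately show ?case unfolding U_def by linarith
qed

lemma card_covered_units_le:
  assumes mG: "mono G" and mH: "mono H" and \<tau>: "1 \<le> \<tau>"
  shows "card (covered_units G H \<tau> T) \<le> H T"
proof (cases "covered_units G H \<tau> T = {}")
  case False
  define U where "U = covered_units G H \<tau> T"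
  have fin: "finite U"
    unfolding U_def using mG mH by (rule finite_covered_units)
  have "Max U \<in> U"
    using fin False unfolding U_def by (rule Max_in)
  then obtain i where i: "i \<in> {1..T}" "G (i - 1) < Max U"
      "Max U \<le> G (i - \<tau>) + (H i - H (i - \<tau>))"
    unfolding U_def covered_units_def by auto
  have "U \<inter> {..Max U} = U" using Max_ge[OF fin] by auto
  then have "card U \<le> H i"
    using card_covered_units_atMost_le[OF mG mH \<tau> i] unfolding U_def by simp
  also have "H i \<le> H T" using i mH by (auto intro: monoD)
  finally show ?thesis unfolding U_def .
qed simp

text \<open>Double counting: slot \<open>i\<close> is counted only by uncovered units strictly between the
  competitor's level \<open>G (i - \<tau>) + (H i - H (i - \<tau>))\<close> and \<open>G (i - \<tau>) + d i\<close>.\<close>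

lemma sum_card_uncovered_demand_le:
  assumes mG: "mono G" and "finite J" and J: "J \<inter> covered_units G H \<tau> T = {}"
    and s: "\<And>j. j \<in> J \<Longrightarrow> s j \<in> {1..T} \<and> G (s j - 1) < j"
  shows "(\<Sum>j\<in>J. card {i\<in>window \<tau> (s j). j \<le> G (i - \<tau>) + d i})
           \<le> (\<Sum>i = 1..T. d i - (H i - H (i - \<tau>)))"
proof -
  define P where "P j i \<longleftrightarrow> i \<in> window \<tau> (s j) \<and> j \<le> G (i - \<tau>) + d i" for j i
  have "(\<Sum>j\<in>J. card {i\<in>window \<tau> (s j). j \<le> G (i - \<tau>) + d i})
      = (\<Sum>j\<in>J. card {i\<in>{1..T}. P j i})"
  proof (rule sum.cong)
    fix j assume "j \<in> J"
    then have "{i\<in>window \<tau> (s j). j \<le> G (i - \<tau>) + d i} = {i\<in>{1..T}. P j i}"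
      using s unfolding P_def window_def by fastforce
    then show "card {i\<in>window \<tau> (s j). j \<le> G (i - \<tau>) + d i} = card {i\<in>{1..T}. P j i}"
      by simp
  qed simp
  also have "\<dots> = (\<Sum>i = 1..T. card {j\<in>J. P j i})"
    using sum.swap_restrict[of J "{1..T}" "\<lambda>_ _. 1::nat" P] \<open>finite J\<close>
    by simp
  also have "\<dots> \<le> (\<Sum>i = 1..T. d i - (H i - H (i - \<tau>)))"
  proof (rule sum_mono)
    fix i assume i: "i \<in> {1..T}"
    have "{j\<in>J. P j i} \<subseteq> {G (i - \<tau>) + (H i - H (i - \<tau>))<..G (i - \<tau>) + d i}"
    proof
      fix j assume "j \<in> {j\<in>J. P j i}"
      then have "j \<in> J" and "P j i" by auto
      then have "i \<le> s j" and "1 \<le> i" unfolding P_def window_def by auto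
      then have "G (i - 1) \<le> G (s j - 1)" using mG by (auto intro: monoD)
      with s[OF \<open>j \<in> J\<close>] have "G (i - 1) < j" by linarith
      with i J \<open>j \<in> J\<close> have "\<not> j \<le> G (i - \<tau>) + (H i - H (i - \<tau>))"
        unfolding covered_units_def by blast
      with \<open>P j i\<close> show "j \<in> {G (i - \<tau>) + (H i - H (i - \<tau>))<..G (i - \<tau>) + d i}"
        unfolding P_def by auto
    qed
    then have "card {j\<in>J. P j i} \<le> card {G (i - \<tau>) + (H i - H (i - \<tau>))<..G (i - \<tau>) + d i}"
      by (rule card_mono[rotated]) simp
    then show "card {j\<in>J. P j i} \<le> d i - (H i - H (i - \<tau>))" by simp
  qed
  finally show ?thesis .
qed

section \<open>Charging the on-demand use\<close>

text \<open>The demand at \<open>i\<close> that the competitor's active reservations cover but the algorithm's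
  do not.\<close>

definition shortfall :: "(nat \<Rightarrow> nat) \<Rightarrow> (nat \<Rightarrow> nat) \<Rightarrow> (nat \<Rightarrow> nat) \<Rightarrow> nat \<Rightarrow> nat \<Rightarrow> nat" where
  "shortfall G H d \<tau> i = G (i - \<tau>) + min (d i) (H i - H (i - \<tau>)) - G i"

lemma demand_minus_window_le:
  fixes G H d :: "nat \<Rightarrow> nat"
  assumes "G (i - \<tau>) \<le> G i"
  shows "d i - (G i - G (i - \<tau>)) \<le> shortfall G H d \<tau> i + (d i - (H i - H (i - \<tau>)))"
proof -
  have "a - (g1 - g0) \<le> g0 + min a w - g1 + (a - w)" if "g0 \<le> g1" for a g0 g1 w :: nat
    using that by (cases "a \<le> w") (simp_all add: min_def)
  from this[OF assms] show ?thesis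
    unfolding shortfall_def .
qed

lemma sum_atMost_skip_zeros:
  fixes u :: "nat \<Rightarrow> 'a::comm_monoid_add"
  assumes "finite S" and "i \<in> S" and "q < i" and "\<And>j. j \<in> S \<Longrightarrow> q < j \<Longrightarrow> j < i \<Longrightarrow> u j = 0"
  shows "(\<Sum>j\<in>S \<inter> {..i}. u j) = (\<Sum>j\<in>S \<inter> {..q}. u j) + u i"
proof -
  have "S \<inter> {..i} = (S \<inter> {..q}) \<union> ((S \<inter> {q<..<i}) \<union> {i})"
    using assms(2,3) by auto
  then have "(\<Sum>j\<in>S \<inter> {..i}. u j) = (\<Sum>j\<in>S \<inter> {..q}. u j) + (\<Sum>j\<in>S \<inter> {q<..<i}. u j) + u i"
    using assms(1,3) by (simp add: sum.union_disjoint disjoint_iff add_ac)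
  moreover have "(\<Sum>j\<in>S \<inter> {q<..<i}. u j) = 0"
    using assms(4) by (intro sum.neutral) auto
  ultimately show ?thesis by simp
qed

text \<open>Induction over the last earlier element \<open>q\<close> of \<open>S\<close> with positive shortfall: if \<open>q\<close> is
  outside the window of \<open>i\<close>, the bound for \<open>q\<close> at time \<open>q\<close> is at most \<open>H q\<close>; otherwise
  separation puts the top \<open>G (q - \<tau>) + d q\<close> of \<open>q\<close> below \<open>G i\<close>.\<close>

lemma sum_shortfall_atMost_le:
  fixes G H d :: "nat \<Rightarrow> nat"
  assumes mG: "mono G" and mH: "mono H" and "finite S"
    and separated: "\<And>q i. q \<in> S \<Longrightarrow> i \<in> S \<Longrightarrow> q < i \<Longrightarrow> i < q + \<tau> \<Longrightarrow>
              0 < shortfall G H d \<tau> q \<Longrightarrow> G (q - \<tau>) + d q \<le> G i"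
    and "i \<in> S" and "0 < shortfall G H d \<tau> i" and "i - \<tau> \<le> t" and "t \<le> i"
  shows "(\<Sum>q\<in>S \<inter> {..i}. shortfall G H d \<tau> q) + G t
           \<le> G (i - \<tau>) + min (d i) (H i - H (i - \<tau>)) + H t"
  using assms(5-)
proof (induction i arbitrary: t rule: less_induct)
  case (less i)
  define u where "u = shortfall G H d \<tau>"
  define top where "top j = G (j - \<tau>) + min (d j) (H j - H (j - \<tau>))" for j
  have u: "u j = top j - G j" for j
    unfolding u_def top_def shortfall_def ..
  have Hm: "H (j - \<tau>) \<le> H j" for j using mH by (auto intro: monoD)
  have "G t \<le> G i" using less.prems(4) by (rule monoD[OF mG])
  define P where "P = {q\<in>S. q < i \<and> 0 < u q}"
  have finP: "finite P" using \<open>finite S\<close> unfolding P_def by auto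
  show ?case
  proof (cases "P = {}")
    case True
    have "(\<Sum>q\<in>S \<inter> {..i}. u q) = (\<Sum>q\<in>{i}. u q)"
      by (rule sum.mono_neutral_right) (use \<open>finite S\<close> less.prems True in \<open>auto simp: P_def\<close>)
    with \<open>G t \<le> G i\<close> show ?thesis
      using less.prems(2) unfolding u_def[symmetric] top_def[symmetric] u by simp
  next
    case False
    define q where "q = Max P"
    have "q \<in> P" unfolding q_def using finP False by (rule Max_in)
    then have q: "q \<in> S" "q < i" "0 < u q" unfolding P_def by auto
    have q_max: "j \<in> P \<Longrightarrow> j \<le> q" for j
      unfolding q_def using finP by (rule Max_ge)
    have "(\<Sum>j\<in>S \<inter> {..i}. u j) = (\<Sum>j\<in>S \<inter> {..q}. u j) + u i"
      using \<open>finite S\<close> less.prems(1) q(2) q_max unfolding P_def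
      by (intro sum_atMost_skip_zeros) fastforce+
    moreover have "u i + G i = top i"
      using less.prems(2) unfolding u u_def[symmetric] by simp
    moreover have "(\<Sum>j\<in>S \<inter> {..q}. u j) + G t \<le> G i + H t"
    proof (cases "q \<le> t")
      case True
      have "(\<Sum>j\<in>S \<inter> {..q}. u j) + G (q - \<tau>) \<le> top q + H (q - \<tau>)"
        using less.IH[OF q(2) q(1) q(3)[unfolded u_def]] unfolding u_def top_def by simp
      also have "\<dots> \<le> G (q - \<tau>) + H q" using Hm[of q] unfolding top_def by linarith
      finally have "(\<Sum>j\<in>S \<inter> {..q}. u j) \<le> H t"
        using monoD[OF mH True] by linarith
      with \<open>G t \<le> G i\<close> show ?thesis by linarith
    next
      case False
      have "(\<Sum>j\<in>S \<inter> {..q}. u j) + G t \<le> top q + H t"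
        using less.IH[OF q(2) q(1) q(3)[unfolded u_def]] less.prems(3) q(2) False
        unfolding u_def top_def by simp
      moreover have "top q \<le> G i"
        using separated[OF q(1) less.prems(1) q(2)] less.prems(3) False q(3)
        unfolding top_def u_def by fastforce
      ultimately show ?thesis by linarith
    qed
    ultimately show ?thesis
      unfolding u_def[symmetric] top_def[symmetric] by linarith
  qed
qed

lemma sum_shortfall_le_if_separated:
  fixes G H d :: "nat \<Rightarrow> nat"
  assumes mG: "mono G" and mH: "mono H" and S: "S \<subseteq> {1..T}"
    and separated: "\<And>q i. q \<in> S \<Longrightarrow> i \<in> S \<Longrightarrow> q < i \<Longrightarrow> i < q + \<tau> \<Longrightarrow>
              0 < shortfall G H d \<tau> q \<Longrightarrow> G (q - \<tau>) + d q \<le> G i"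
  shows "(\<Sum>i\<in>S. shortfall G H d \<tau> i) \<le> H T"
proof -
  define Q where "Q = {i\<in>S. 0 < shortfall G H d \<tau> i}"
  have "finite S" using S finite_subset by blast
  then have finQ: "finite Q" unfolding Q_def by auto
  show ?thesis
  proof (cases "Q = {}")
    case True
    then have "(\<Sum>i\<in>S. shortfall G H d \<tau> i) = 0"
      unfolding Q_def by (intro sum.neutral) auto
    then show ?thesis by simp
  next
    case False
    define m where "m = Max Q"
    have "m \<in> Q" unfolding m_def using finQ False by (rule Max_in)
    then have m: "m \<in> S" "0 < shortfall G H d \<tau> m" unfolding Q_def by auto
    have m_max: "i \<in> Q \<Longrightarrow> i \<le> m" for i
      unfolding m_def using finQ by (rule Max_ge)
    have "(\<Sum>i\<in>S. shortfall G H d \<tau> i) = (\<Sum>i\<in>S \<inter> {..m}. shortfall G H d \<tau> i)"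
      using m_max unfolding Q_def by (intro sum.mono_neutral_right \<open>finite S\<close>) fastforce+
    also have "\<dots> \<le> H m"
      using sum_shortfall_atMost_le[OF mG mH \<open>finite S\<close> separated m, of "m - \<tau>"]
        monoD[OF mH, of "m - \<tau>" m] by simp
    also have "\<dots> \<le> H T" using m(1) S by (intro monoD[OF mH]) auto
    finally show ?thesis .
  qed
qed

definition proper_colouring :: "nat set \<Rightarrow> (nat \<Rightarrow> nat \<Rightarrow> bool) \<Rightarrow> nat \<Rightarrow> (nat \<Rightarrow> nat) \<Rightarrow> bool" where
  "proper_colouring A R k col \<longleftrightarrow>
     (\<forall>i\<in>A. col i < k) \<and> (\<forall>q\<in>A. \<forall>i\<in>A. q < i \<and> R q i \<longrightarrow> col q \<noteq> col i)"

lemma proper_colouring_extend: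
  assumes col: "proper_colouring (A \<inter> {..<n}) R k col"
    and deg: "card {q\<in>A. q < n \<and> R q n} < k"
  shows "\<exists>c. proper_colouring (A \<inter> {..<Suc n}) R k (col(n := c))"
proof -
  define B where "B = col ` {q\<in>A. q < n \<and> R q n}"
  have "card B \<le> card {q\<in>A. q < n \<and> R q n}"
    unfolding B_def by (rule card_image_le) simp
  with deg have "card B < card {..<k}" by simp
  moreover have "finite B" unfolding B_def by simp
  ultimately have "\<not> {..<k} \<subseteq> B"
    by (meson card_mono not_le)
  then obtain c where c: "c < k" "c \<notin> B" by auto
  have "col q \<noteq> c" if "q \<in> A" "q < n" "R q n" for q
    using c(2) that unfolding B_def by auto
  with col c have "proper_colouring (A \<inter> {..<Suc n}) R k (col(n := c))"
    unfolding proper_colouring_def by (auto simp: less_Suc_eq)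
  then show ?thesis ..
qed

lemma exists_proper_colouring:
  assumes "finite A" and deg: "\<And>i. i \<in> A \<Longrightarrow> card {q\<in>A. q < i \<and> R q i} < k"
  shows "\<exists>col. proper_colouring A R k col"
proof -
  have "\<exists>col. proper_colouring (A \<inter> {..<n}) R k col" for n
  proof (induction n)
    case 0
    show ?case by (simp add: proper_colouring_def)
  next
    case (Suc n)
    then obtain col where col: "proper_colouring (A \<inter> {..<n}) R k col" ..
    show ?case
    proof (cases "n \<in> A")
      case True
      with col deg show ?thesis by (blast dest: proper_colouring_extend)
    next
      case False
      then have "A \<inter> {..<Suc n} = A \<inter> {..<n}" by (auto simp: less_Suc_eq)
      with col show ?thesis by auto
    qed
  qed
  moreover obtain N where "A \<subseteq> {..<N}"
    using \<open>finite A\<close> by (auto simp: finite_nat_set_iff_bounded)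
  ultimately show ?thesis by (metis inf.absorb1)
qed

text \<open>Slots \<open>q < i\<close> in a common window whose demand still exceeds the algorithm's reservations
  at time \<open>i\<close> are few by sparsity; colouring them apart leaves \<open>k\<close> separated classes.\<close>

lemma sum_shortfall_le:
  fixes G H d :: "nat \<Rightarrow> nat"
  assumes mG: "mono G" and mH: "mono H" and \<tau>: "1 \<le> \<tau>"
    and sparse: "\<And>t. t \<in> {1..T} \<Longrightarrow> card {q\<in>window \<tau> t. G t < G (q - \<tau>) + d q} \<le> k"
  shows "(\<Sum>i = 1..T. shortfall G H d \<tau> i) \<le> k * H T"
proof -
  define A where "A = {i\<in>{1..T}. 0 < shortfall G H d \<tau> i}"
  define R where "R q i \<longleftrightarrow> i < q + \<tau> \<and> G i < G (q - \<tau>) + d q" for q i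
  have "finite A" unfolding A_def by simp
  have "card {q\<in>A. q < i \<and> R q i} < k" if "i \<in> A" for i
  proof -
    have "G i < G (i - \<tau>) + d i"
      using that unfolding A_def shortfall_def by auto
    then have "insert i {q\<in>A. q < i \<and> R q i} \<subseteq> {q\<in>window \<tau> i. G i < G (q - \<tau>) + d q}"
      using that \<tau> unfolding A_def R_def window_def by auto
    then have "card (insert i {q\<in>A. q < i \<and> R q i}) \<le> card {q\<in>window \<tau> i. G i < G (q - \<tau>) + d q}"
      by (rule card_mono[rotated]) (simp add: finite_window)
    also have "\<dots> \<le> k"
      using sparse that unfolding A_def by simp
    finally have "card (insert i {q\<in>A. q < i \<and> R q i}) \<le> k" .
    then show ?thesis
      using \<open>finite A\<close> by simp
  qed
  then obtain col where "proper_colouring A R k col"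
    using exists_proper_colouring[OF \<open>finite A\<close>] by blast
  then have col_lt: "\<forall>i\<in>A. col i < k"
    and col_proper: "\<forall>q\<in>A. \<forall>i\<in>A. q < i \<and> R q i \<longrightarrow> col q \<noteq> col i"
    unfolding proper_colouring_def by auto
  have class_le: "(\<Sum>i\<in>{i\<in>A. col i = c}. shortfall G H d \<tau> i) \<le> H T" for c
  proof (rule sum_shortfall_le_if_separated[OF mG mH])
    show "{i\<in>A. col i = c} \<subseteq> {1..T}" unfolding A_def by auto
  next
    fix q i assume "q \<in> {i\<in>A. col i = c}" "i \<in> {i\<in>A. col i = c}" "q < i" "i < q + \<tau>"
    then have "\<not> R q i" using col_proper[rule_format, of q i] by auto
    with \<open>i < q + \<tau>\<close> show "G (q - \<tau>) + d q \<le> G i"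
      unfolding R_def by simp
  qed
  have "(\<Sum>i = 1..T. shortfall G H d \<tau> i) = (\<Sum>i\<in>A. shortfall G H d \<tau> i)"
    by (rule sum.mono_neutral_right) (auto simp: A_def)
  also have "\<dots> = (\<Sum>c<k. \<Sum>i\<in>{i\<in>A. col i = c}. shortfall G H d \<tau> i)"
    by (rule sum.group[symmetric]) (use col_lt \<open>finite A\<close> in auto)
  also have "\<dots> \<le> (\<Sum>c<k. H T)"
    by (rule sum_mono) (rule class_le)
  finally show ?thesis by simp
qed

section \<open>The algorithm \<open>A\<^sub>z\<close>\<close>

locale online_reservation =
  fixes p z :: real and \<tau> :: nat and d :: "nat \<Rightarrow> nat"
  assumes p_pos: "0 < p" and z_pos: "0 < z" and \<tau>_pos: "1 \<le> \<tau>"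
begin

abbreviation R :: "nat \<Rightarrow> nat" where
  "R \<equiv> cum (alg_r p z \<tau> d)"

lemma alg_r_Suc: "alg_r p z \<tau> d (Suc t) = alg_k p z \<tau> d (alg_x p z \<tau> d t) (Suc t)"
  by (simp add: alg_r_def)

lemma alg_x_eq: "t < i + \<tau> \<Longrightarrow> alg_x p z \<tau> d t i = R t - R (i - \<tau>)"
proof (induction t)
  case (Suc t)
  show ?case
  proof (cases "i < Suc t + \<tau>")
    case True
    then have "R (i - \<tau>) \<le> R t" by (intro cum_mono) linarith
    with True Suc show ?thesis by (simp add: Let_def alg_r_Suc)
  next
    case False
    then have "R (Suc t) \<le> R (i - \<tau>)" by (intro cum_mono) linarith
    with False Suc show ?thesis by (simp add: Let_def alg_r_Suc)
  qed
qed simp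

lemma alg_o_eq: "alg_o p z \<tau> d t = d t - (R t - R (t - \<tau>))"
  unfolding alg_o_def using alg_x_eq[of t t] \<tau>_pos by simp

lemma alg_x_window:
  assumes "i \<in> window \<tau> t"
  shows "alg_x p z \<tau> d (t - 1) i = R (t - 1) - R (i - \<tau>)" and "R (i - \<tau>) \<le> R (t - 1)"
  using assms \<tau>_pos unfolding window_def by (auto intro!: alg_x_eq cum_mono)

lemma alg_k_exists: "\<exists>k. \<not> z < p * real (card {i\<in>window \<tau> t. x i + k < d i})"
proof -
  have "d i \<le> (\<Sum>j\<le>t. d j)" if "i \<le> t" for i
    using that by (intro member_le_sum) auto
  then have "{i\<in>window \<tau> t. x i + (\<Sum>j\<le>t. d j) < d i} = {}"
    unfolding window_def by fastforce
  with z_pos show ?thesis by (metis card.empty of_nat_0 mult_zero_right not_less_iff_gr_or_eq)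
qed

lemma alg_r_stops:
  assumes "1 \<le> t"
  shows "\<not> z < p * real (card {i\<in>window \<tau> t. alg_x p z \<tau> d (t - 1) i + alg_r p z \<tau> d t < d i})"
proof -
  obtain t' where t: "t = Suc t'" using assms by (cases t) auto
  show ?thesis
    unfolding t alg_r_Suc alg_k_def diff_Suc_1 by (rule LeastI_ex) (rule alg_k_exists)
qed

lemma alg_r_least:
  assumes "1 \<le> t" and "c < alg_r p z \<tau> d t"
  shows "z < p * real (card {i\<in>window \<tau> t. alg_x p z \<tau> d (t - 1) i + c < d i})"
proof -
  obtain t' where t: "t = Suc t'" using assms by (cases t) auto
  from assms(2) show ?thesis
    unfolding t alg_r_Suc alg_k_def diff_Suc_1 using not_less_Least by force
qed

lemma R_step: "1 \<le> t \<Longrightarrow> R t = R (t - 1) + alg_r p z \<tau> d t"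
  using cum_Suc[of _ "t - 1"] by simp

lemma few_uncovered_after_reserving:
  assumes "1 \<le> t"
  shows "p * real (card {i\<in>window \<tau> t. R t < R (i - \<tau>) + d i}) \<le> z"
proof -
  have "{i\<in>window \<tau> t. alg_x p z \<tau> d (t - 1) i + alg_r p z \<tau> d t < d i}
      = {i\<in>window \<tau> t. R t < R (i - \<tau>) + d i}"
    using alg_x_window R_step[OF assms] by (intro Collect_cong conj_cong refl) fastforce
  with alg_r_stops[OF assms] show ?thesis by simp
qed

lemma many_uncovered_before_reserving:
  assumes "1 \<le> t" and "R (t - 1) < j" and "j \<le> R t"
  shows "z < p * real (card {i\<in>window \<tau> t. j \<le> R (i - \<tau>) + d i})"
proof -
  define c where "c = j - R (t - 1) - 1"
  have c: "c < alg_r p z \<tau> d t" using R_step[OF assms(1)] assms unfolding c_def by linarith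
  have same: "{i\<in>window \<tau> t. alg_x p z \<tau> d (t - 1) i + c < d i}
      = {i\<in>window \<tau> t. j \<le> R (i - \<tau>) + d i}"
    using alg_x_window assms(2) unfolding c_def by (intro Collect_cong conj_cong refl) fastforce
  show ?thesis using alg_r_least[OF assms(1) c] unfolding same .
qed

lemma reservations_le:
  "z * real (R T) \<le> z * real (cum rv T) + p * real (\<Sum>i = 1..T. d i - (cum rv i - cum rv (i - \<tau>)))"
proof -
  define U where "U = covered_units R (cum rv) \<tau> T"
  define J where "J = {1..R T} - U"
  have "card U \<le> cum rv T"
    unfolding U_def using mono_cum mono_cum \<tau>_pos by (rule card_covered_units_le)
  have "\<forall>j\<in>J. \<exists>s\<in>{1..T}. R (s - 1) < j \<and> j \<le> R s"
    unfolding J_def by (intro ballI ex_cum_crossing) auto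
  then obtain s where s: "\<And>j. j \<in> J \<Longrightarrow> s j \<in> {1..T} \<and> R (s j - 1) < j \<and> j \<le> R (s j)"
    by metis
  define n where "n j = card {i\<in>window \<tau> (s j). j \<le> R (i - \<tau>) + d i}" for j
  have "finite J" unfolding J_def by simp
  have "R T \<le> card U + card J"
  proof -
    have "card {1..R T} \<le> card (U \<union> J)"
      using finite_covered_units[OF mono_cum mono_cum] unfolding J_def U_def
      by (intro card_mono) auto
    then show ?thesis using card_Un_le[of U J] by simp
  qed
  then have "z * real (R T) \<le> z * real (card U) + z * real (card J)"
    using z_pos by (simp flip: distrib_left)
  also have "\<dots> \<le> z * real (cum rv T) + p * real (\<Sum>j\<in>J. n j)"
  proof (rule add_mono)
    show "z * real (card U) \<le> z * real (cum rv T)"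
      using \<open>card U \<le> cum rv T\<close> z_pos by simp
    have "z * real (card J) = (\<Sum>j\<in>J. z)" by simp
    also have "\<dots> \<le> (\<Sum>j\<in>J. p * real (n j))"
      using s many_uncovered_before_reserving unfolding n_def
      by (intro sum_mono less_imp_le) auto
    finally show "z * real (card J) \<le> p * real (\<Sum>j\<in>J. n j)"
      by (simp add: sum_distrib_left)
  qed
  also have "\<dots> \<le> z * real (cum rv T) + p * real (\<Sum>i = 1..T. d i - (cum rv i - cum rv (i - \<tau>)))"
  proof -
    have "(\<Sum>j\<in>J. n j) \<le> (\<Sum>i = 1..T. d i - (cum rv i - cum rv (i - \<tau>)))"
      unfolding n_def using mono_cum \<open>finite J\<close>
      by (rule sum_card_uncovered_demand_le) (use s in \<open>auto simp: J_def U_def\<close>)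
    with p_pos show ?thesis
      by (intro add_left_mono mult_left_mono of_nat_mono) auto
  qed
  finally show ?thesis .
qed

lemma on_demand_le:
  "p * real (\<Sum>i = 1..T. alg_o p z \<tau> d i)
     \<le> z * real (cum rv T) + p * real (\<Sum>i = 1..T. d i - (cum rv i - cum rv (i - \<tau>)))"
proof -
  define k where "k = nat \<lfloor>z / p\<rfloor>"
  have "p * real k \<le> z"
  proof -
    have "real k \<le> z / p" unfolding k_def using z_pos p_pos by simp
    with p_pos show ?thesis by (simp add: pos_le_divide_eq mult.commute)
  qed
  have "card {q\<in>window \<tau> t. R t < R (q - \<tau>) + d q} \<le> k" if "t \<in> {1..T}" for t
    using few_uncovered_after_reserving[of t] that p_pos unfolding k_def
    by (simp add: le_nat_floor pos_le_divide_eq mult.commute)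
  then have "(\<Sum>i = 1..T. shortfall R (cum rv) d \<tau> i) \<le> k * cum rv T"
    using mono_cum mono_cum \<tau>_pos by (intro sum_shortfall_le) auto
  moreover have "(\<Sum>i = 1..T. alg_o p z \<tau> d i)
      \<le> (\<Sum>i = 1..T. shortfall R (cum rv) d \<tau> i) + (\<Sum>i = 1..T. d i - (cum rv i - cum rv (i - \<tau>)))"
    unfolding alg_o_eq sum.distrib[symmetric]
    by (intro sum_mono demand_minus_window_le cum_mono) simp
  ultimately have "real (\<Sum>i = 1..T. alg_o p z \<tau> d i)
      \<le> real k * real (cum rv T) + real (\<Sum>i = 1..T. d i - (cum rv i - cum rv (i - \<tau>)))"
    by (simp only: flip: of_nat_mult of_nat_add of_nat_le_iff)
  then have "p * real (\<Sum>i = 1..T. alg_o p z \<tau> d i)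
      \<le> p * (real k * real (cum rv T) + real (\<Sum>i = 1..T. d i - (cum rv i - cum rv (i - \<tau>))))"
    using p_pos by (intro mult_left_mono) auto
  also have "\<dots> = p * real k * real (cum rv T) + p * real (\<Sum>i = 1..T. d i - (cum rv i - cum rv (i - \<tau>)))"
    by (simp only: distrib_left mult.assoc)
  also have "\<dots> \<le> z * real (cum rv T) + p * real (\<Sum>i = 1..T. d i - (cum rv i - cum rv (i - \<tau>)))"
    using \<open>p * real k \<le> z\<close> by (simp add: mult_right_mono)
  finally show ?thesis .
qed

lemma weighted_cost_le_twice_feasible:
  assumes "feasible \<tau> d T ov rv"
  shows "z * real (\<Sum>t = 1..T. alg_r p z \<tau> d t) + p * real (\<Sum>t = 1..T. alg_o p z \<tau> d t)
         \<le> 2 * (z * real (\<Sum>t = 1..T. rv t) + p * real (\<Sum>t = 1..T. ov t))"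
proof -
  have "p * real (\<Sum>i = 1..T. d i - (cum rv i - cum rv (i - \<tau>))) \<le> p * real (\<Sum>t = 1..T. ov t)"
    using p_pos feasible_on_demand_ge[OF assms] by (intro mult_left_mono of_nat_mono) auto
  then have "z * real (R T) + p * real (\<Sum>t = 1..T. alg_o p z \<tau> d t)
      \<le> 2 * (z * real (cum rv T) + p * real (\<Sum>t = 1..T. ov t))"
    using reservations_le[of T rv] on_demand_le[of T rv] by argo
  then show ?thesis
    unfolding cum_def .
qed

end

section \<open>Competitive ratio\<close>

lemma cost_eq:
  "cost p \<alpha> d T ov rv = \<alpha> * p * real (\<Sum>t = 1..T. d t) + (1 - \<alpha>) * p * real (\<Sum>t = 1..T. ov t)
     + real (\<Sum>t = 1..T. rv t)"
proof -
  have "cost p \<alpha> d T ov rv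
      = (\<Sum>t = 1..T. \<alpha> * p * real (d t) + (1 - \<alpha>) * p * real (ov t) + real (rv t))"
    unfolding cost_def by (rule sum.cong) (auto simp: algebra_simps)
  then show ?thesis
    by (simp add: sum.distrib sum_distrib_left)
qed

lemma copt_greatest:
  assumes "\<And>ov rv. feasible \<tau> d T ov rv \<Longrightarrow> B \<le> cost p \<alpha> d T ov rv"
  shows "B \<le> copt p \<alpha> \<tau> d T"
proof -
  have "feasible \<tau> d T d (\<lambda>_. 0)" unfolding feasible_def by simp
  then show ?thesis
    unfolding copt_def using assms by (intro cInf_greatest) auto
qed

lemma copt_le_all_on_demand:
  assumes "0 \<le> p" and "0 \<le> \<alpha>" and "\<alpha> \<le> 1"
  shows "copt p \<alpha> \<tau> d T \<le> p * real (\<Sum>t = 1..T. d t)"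
proof -
  let ?C = "{cost p \<alpha> d T ov rv | ov rv. feasible \<tau> d T ov rv}"
  have "feasible \<tau> d T d (\<lambda>_. 0)" unfolding feasible_def by simp
  then have "cost p \<alpha> d T d (\<lambda>_. 0) \<in> ?C" by blast
  moreover have "0 \<le> cost p \<alpha> d T ov rv" for ov rv
    unfolding cost_eq using assms by (intro add_nonneg_nonneg mult_nonneg_nonneg) (auto intro: sum_nonneg)
  then have "bdd_below ?C" by (auto simp: bdd_below_def)
  ultimately have "copt p \<alpha> \<tau> d T \<le> cost p \<alpha> d T d (\<lambda>_. 0)"
    unfolding copt_def by (rule cInf_lower)
  also have "\<dots> = p * real (\<Sum>t = 1..T. d t)"
    unfolding cost_eq by (simp add: algebra_simps)
  finally show ?thesis .
qed

text \<open>The reservation fee \<open>1\<close> and the on-demand surcharge \<open>(1 - \<alpha>) p\<close> are in the ratio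
  \<open>z : p\<close> for \<open>z = 1 / (1 - \<alpha>)\<close>.\<close>

lemma cost_alg_le_twice_feasible_cost:
  assumes "0 < p" and "0 \<le> \<alpha>" and "\<alpha> < 1" and "1 \<le> \<tau>" and "feasible \<tau> d T ov rv"
  shows "cost p \<alpha> d T (alg_o p (1 / (1 - \<alpha>)) \<tau> d) (alg_r p (1 / (1 - \<alpha>)) \<tau> d)
           \<le> 2 * cost p \<alpha> d T ov rv - \<alpha> * p * real (\<Sum>t = 1..T. d t)"
proof -
  define z where "z = 1 / (1 - \<alpha>)"
  interpret online_reservation p z \<tau> d
    using assms unfolding z_def by unfold_locales auto
  define RA where "RA = real (\<Sum>t = 1..T. alg_r p z \<tau> d t)"
  define OA where "OA = real (\<Sum>t = 1..T. alg_o p z \<tau> d t)"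
  define RV where "RV = real (\<Sum>t = 1..T. rv t)"
  define OV where "OV = real (\<Sum>t = 1..T. ov t)"
  define q where "q = (1 - \<alpha>) * p"
  have p: "p = z * q" using assms unfolding z_def q_def by simp
  have "z * (RA + q * OA) \<le> z * (2 * (RV + q * OV))"
    using weighted_cost_le_twice_feasible[OF assms(5)]
    unfolding RA_def[symmetric] OA_def[symmetric] RV_def[symmetric] OV_def[symmetric]
    by (simp add: p algebra_simps)
  then have "RA + q * OA \<le> 2 * (RV + q * OV)"
    using z_pos by simp
  then show ?thesis
    unfolding cost_eq z_def[symmetric] RA_def[symmetric] OA_def[symmetric] RV_def[symmetric]
      OV_def[symmetric] q_def by argo
qed

theorem proposition1:
  fixes p \<alpha> :: real and \<tau> T :: nat and d :: "nat \<Rightarrow> nat"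
  assumes "p > 0" and "0 \<le> \<alpha>" and "\<alpha> < 1" and "\<tau> \<ge> 1"
  shows "cost p \<alpha> d T (alg_o p (1 / (1 - \<alpha>)) \<tau> d) (alg_r p (1 / (1 - \<alpha>)) \<tau> d)
           \<le> (2 - \<alpha>) * copt p \<alpha> \<tau> d T"
proof -
  let ?alg = "cost p \<alpha> d T (alg_o p (1 / (1 - \<alpha>)) \<tau> d) (alg_r p (1 / (1 - \<alpha>)) \<tau> d)"
  let ?D = "p * real (\<Sum>t = 1..T. d t)"
  have "(?alg + \<alpha> * ?D) / 2 \<le> copt p \<alpha> \<tau> d T"
    using cost_alg_le_twice_feasible_cost[OF assms] by (intro copt_greatest) (simp add: field_simps)
  moreover have "\<alpha> * copt p \<alpha> \<tau> d T \<le> \<alpha> * ?D"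
    using assms copt_le_all_on_demand[of p \<alpha>] by (intro mult_left_mono) auto
  ultimately show ?thesis by (simp add: algebra_simps)
qed

end
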